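(* Let $\Phi=\{\phi_j\}$ be a $\Phi$-sequence, $\nu$ a modulus of variation, and $1\le p<\infty$. Then $\Phi\mathrm{BV}\subseteq V_p[\nu]$ (as classes of functions on $[0,1]$) if and only if $$\limsup_{n\to\infty}\frac{1}{\nu(n)}\max_{1\le k\le n}k^{1/p}\,\Phi_k^{-1}(1)<\infty.$$
   Context: A $\Phi$-sequence is a sequence $\{\phi_j\}_{j\ge1}$ of increasing convex functions on $[0,\infty)$ with $\phi_j(0)=0$, $0<\phi_{j+1}(x)\le\phi_j(x)$ for all $j$ and $x>0$, and $\sum_j\phi_j(x)=\infty$ for $x>0$. $\Phi_n=\sum_{j=1}^n\phi_j$ and $\Phi_n^{-1}$ is its inverse function. $\mathrm{Var}_\Phi(f)=\sup\sum_{j=1}^n\phi_j(|f(I_j)|)$ over all finite collections $\{I_j\}$ of nonoverlapping subintervals of $[0,1]$, with $f(I)=f(\sup I)-f(\inf I)$; $\Phi\mathrm{BV}$ is the set of $f$ such that $\mathrm{Var}_\Phi(cf)<\infty$ for some $c>0$. A modulus of variation is a nondecreasing concave sequence of positive numbers $\nu(1),\nu(2),\dots$. $\upsilon_p(n,f)=\sup(\sum_{j=1}^n|f(I_j)|^p)^{1/p}$ over $n$ nonoverlapping subintervals of $[0,1]$, and $V_p[\nu]$ is the set of bounded $f$ on $[0,1]$ with $\sup_n\upsilon_p(n,f)/\nu(n)<\infty$. *)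

theory Defs
  imports "HOL-Analysis.Analysis" "HOL-Library.Extended_Real"
begin

text \<open>Sequences are indexed from 1; the value at index 0 is irrelevant.\<close>

definition Phi_sequence :: "(nat \<Rightarrow> real \<Rightarrow> real) \<Rightarrow> bool" where
  "Phi_sequence phi \<longleftrightarrow>
     (\<forall>j\<ge>1. mono_on {0..} (phi j) \<and> convex_on {0..} (phi j) \<and> phi j 0 = 0) \<and>
     (\<forall>j\<ge>1. \<forall>x>0. 0 < phi (Suc j) x \<and> phi (Suc j) x \<le> phi j x) \<and>
     (\<forall>j\<ge>1. \<forall>x>0. 0 < phi j x) \<and>
     (\<forall>x>0. \<not> summable (\<lambda>j. phi (Suc j) x))"

definition Phi_n :: "(nat \<Rightarrow> real \<Rightarrow> real) \<Rightarrow> nat \<Rightarrow> real \<Rightarrow> real" where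
  "Phi_n phi n x = (\<Sum>j=1..n. phi j x)"

definition Phi_n_inv :: "(nat \<Rightarrow> real \<Rightarrow> real) \<Rightarrow> nat \<Rightarrow> real \<Rightarrow> real" where
  "Phi_n_inv phi n y = (THE x. 0 \<le> x \<and> Phi_n phi n x = y)"

definition nonoverlapping :: "nat \<Rightarrow> (nat \<Rightarrow> real) \<Rightarrow> (nat \<Rightarrow> real) \<Rightarrow> bool" where
  "nonoverlapping n a b \<longleftrightarrow>
     (\<forall>j\<in>{1..n}. 0 \<le> a j \<and> a j \<le> b j \<and> b j \<le> 1) \<and>
     (\<forall>i\<in>{1..n}. \<forall>j\<in>{1..n}. i \<noteq> j \<longrightarrow> b i \<le> a j \<or> b j \<le> a i)"

definition Var_Phi :: "(nat \<Rightarrow> real \<Rightarrow> real) \<Rightarrow> (real \<Rightarrow> real) \<Rightarrow> ereal" where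
  "Var_Phi phi f = (SUP (n, a, b) \<in> {(n, a, b). nonoverlapping n a b}.
      ereal (\<Sum>j=1..n. phi j \<bar>f (b j) - f (a j)\<bar>))"

definition PhiBV :: "(nat \<Rightarrow> real \<Rightarrow> real) \<Rightarrow> (real \<Rightarrow> real) set" where
  "PhiBV phi = {f. \<exists>c>0. Var_Phi phi (\<lambda>x. c * f x) < \<infinity>}"

definition modulus_of_variation :: "(nat \<Rightarrow> real) \<Rightarrow> bool" where
  "modulus_of_variation nu \<longleftrightarrow>
     (\<forall>n\<ge>1. 0 < nu n \<and> nu n \<le> nu (Suc n)) \<and>
     (\<forall>n\<ge>1. nu (Suc (Suc n)) - nu (Suc n) \<le> nu (Suc n) - nu n)"

definition upsilon_p :: "real \<Rightarrow> nat \<Rightarrow> (real \<Rightarrow> real) \<Rightarrow> ereal" where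
  "upsilon_p p n f = (SUP (a, b) \<in> {(a, b). nonoverlapping n a b}.
      ereal ((\<Sum>j=1..n. \<bar>f (b j) - f (a j)\<bar> powr p) powr (1 / p)))"

definition V_p :: "real \<Rightarrow> (nat \<Rightarrow> real) \<Rightarrow> (real \<Rightarrow> real) set" where
  "V_p p nu = {f. bounded (f ` {0..1}) \<and>
      (SUP n\<in>{1..}. upsilon_p p n f / ereal (nu n)) < \<infinity>}"

end

theory Submission
  imports Defs "HOL-Library.Nat_Bijection"
begin

text \<open>
Write \<open>a k = Phi_n_inv phi k 1\<close>, i.e. \<open>Phi_k (a k) = 1\<close>; the limsup condition says that
\<open>k powr (1/p) * a k \<le> C * nu k\<close> for all \<open>k\<close>.

Sufficiency: scale \<open>f\<close> so that all its \<open>Phi\<close>-variation sums are at most 1 and sort the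
increments over \<open>n\<close> intervals decreasingly, \<open>x 1 \<ge> \<dots> \<ge> x n\<close>; then \<open>\<Sum>j. phi j (x j) \<le> 1\<close>.
With \<open>E = max {k * a k powr p | k \<le> n}\<close>, the increments below \<open>a n\<close> contribute at most
\<open>n * a n powr p \<le> E\<close>, and every other one satisfies \<open>k * x k powr p \<le> 2 E Phi_k (x k)\<close>.
Abel summation together with the convexity of \<open>Phi_k\<close> turns these into
\<open>\<Sum>k. x k powr p \<le> 2 p E \<Sum>k. phi k (x k)\<close>, so the \<open>p\<close>-variation over \<open>n\<close> intervals is at most
\<open>((2p + 1) E) powr (1/p) \<le> (2p + 1) powr (1/p) * C * nu n\<close>.

Necessity: otherwise pick \<open>k i\<close> with \<open>k i powr (1/p) * a (k i) > 4^i * nu (k i)\<close> and let \<open>f\<close>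
have, for every \<open>i\<close>, \<open>k i\<close> spikes of height \<open>h i = a (k i) / 2^i\<close> at distinct points \<open>1/(m+1)\<close>.
Every \<open>Phi\<close>-variation sum of \<open>f\<close> is at most twice a sum of values of the \<open>phi j\<close> at spike
heights, to which block \<open>i\<close> contributes at most \<open>Phi_(k i) (h i) \<le> 2^-i\<close>; so \<open>f\<close> is in
\<open>PhiBV\<close>, while the spikes of block \<open>i\<close> alone give \<open>upsilon_p p (k i) f > 2^i * nu (k i)\<close>.
\<close>

lemma one_minus_powr_le:
  fixes t p :: real
  assumes "1 \<le> p" "0 \<le> t" "t \<le> 1"
  shows "1 - t powr p \<le> p * (1 - t)"
proof (cases "t = 0")
  case True
  then show ?thesis using assms by simp
next
  case False
  then have "p * 1 powr (p - 1) * (t - 1) \<le> t powr p - 1 powr p"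
    using assms
    by (intro convex_on_imp_above_tangent[where A = "{0<..}", OF powr_convex])
       (auto intro!: derivative_eq_intros simp: interior_open)
  then show ?thesis by (simp add: algebra_simps)
qed

lemma sum_abs_powr_scale:
  fixes t :: real
  assumes "0 \<le> t"
  shows "(\<Sum>j\<in>A. \<bar>t * u j\<bar> powr p) = t powr p * (\<Sum>j\<in>A. \<bar>u j\<bar> powr p)"
  using assms by (simp add: abs_mult powr_mult sum_distrib_left)

lemma modulus_of_variation_pos: "modulus_of_variation nu \<Longrightarrow> n \<ge> 1 \<Longrightarrow> 0 < nu n"
  unfolding modulus_of_variation_def by simp

lemma modulus_of_variation_mono:
  assumes "modulus_of_variation nu"
  shows "mono_on {1..} nu"
proof (rule mono_onI)
  fix k n :: nat
  assume "k \<in> {1..}" and "k \<le> n"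
  from \<open>k \<le> n\<close> show "nu k \<le> nu n"
  proof (induction n rule: dec_induct)
    case (step m)
    have "nu m \<le> nu (Suc m)"
      using assms \<open>k \<in> {1..}\<close> step(1) unfolding modulus_of_variation_def by simp
    then show ?case using step(3) by simp
  qed simp
qed

lemma limsup_Max_div_less_PInfD:
  fixes r nu :: "nat \<Rightarrow> real"
  assumes pos: "\<And>n. n \<ge> 1 \<Longrightarrow> 0 < nu n"
    and limsup: "limsup (\<lambda>n. ereal ((1 / nu n) * Max (r ` {1..n}))) < \<infinity>"
  obtains C where "\<And>k. k \<ge> 1 \<Longrightarrow> r k \<le> C * nu k"
proof -
  let ?X = "\<lambda>n. ereal ((1 / nu n) * Max (r ` {1..n}))"
  have "limsup ?X \<noteq> \<infinity>" using limsup by simp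
  then obtain L :: nat where L: "limsup ?X < ereal (real L)"
    unfolding less_PInf_Ex_of_nat ..
  obtain N where N: "\<And>n. n \<ge> N \<Longrightarrow> ?X n < ereal L"
    using Limsup_lessD[OF L] by (auto simp: eventually_sequentially)
  define C where "C = max L (Max ((\<lambda>k. r k / nu k) ` {1..N}))"
  have "r k \<le> C * nu k" if k: "k \<ge> 1" for k
  proof (cases "N \<le> k")
    case True
    have "r k \<le> Max (r ` {1..k})" using k by (intro Max_ge) auto
    also have "\<dots> < L * nu k" using N[OF True] pos[OF k] by (simp add: field_simps)
    also have "\<dots> \<le> C * nu k" using pos[OF k] by (intro mult_right_mono) (auto simp: C_def)
    finally show ?thesis by simp
  next
    case False
    then have "r k / nu k \<le> C" unfolding C_def using k by (intro max.coboundedI2 Max_ge) auto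
    then show ?thesis using pos[OF k] by (simp add: field_simps)
  qed
  then show ?thesis using that by blast
qed

lemma limsup_Max_div_less_PInfI:
  fixes r nu :: "nat \<Rightarrow> real"
  assumes pos: "\<And>n. n \<ge> 1 \<Longrightarrow> 0 < nu n" and mono: "mono_on {1..} nu"
    and bound: "\<And>k. k \<ge> 1 \<Longrightarrow> r k \<le> C * nu k"
  shows "limsup (\<lambda>n. ereal ((1 / nu n) * Max (r ` {1..n}))) < \<infinity>"
proof -
  define C' where "C' = max C 0"
  have "ereal ((1 / nu n) * Max (r ` {1..n})) \<le> ereal C'" if n: "n \<ge> 1" for n
  proof -
    have "Max (r ` {1..n}) \<le> C' * nu n"
    proof (rule Max.boundedI)
      fix y assume "y \<in> r ` {1..n}"
      then obtain k where k: "k \<in> {1..n}" "y = r k" by auto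
      have "r k \<le> C * nu k" using bound k by simp
      also have "\<dots> \<le> C' * nu k" using pos[of k] k by (intro mult_right_mono) (auto simp: C'_def)
      also have "\<dots> \<le> C' * nu n" using k by (intro mult_left_mono mono_onD[OF mono]) (auto simp: C'_def)
      finally show "y \<le> C' * nu n" using k by simp
    qed (use n in auto)
    then show ?thesis using pos[OF n] by (simp add: field_simps)
  qed
  then have "limsup (\<lambda>n. ereal ((1 / nu n) * Max (r ` {1..n}))) \<le> ereal C'"
    by (intro Limsup_bounded eventually_sequentiallyI[of 1]) auto
  then show ?thesis using le_less_trans[of _ "ereal C'" \<infinity>] by simp
qed

lemma limsup_Max_div_less_PInf_iff:
  fixes r nu :: "nat \<Rightarrow> real"
  assumes "\<And>n. n \<ge> 1 \<Longrightarrow> 0 < nu n" and "mono_on {1..} nu"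
  shows "limsup (\<lambda>n. ereal ((1 / nu n) * Max (r ` {1..n}))) < \<infinity> \<longleftrightarrow>
    (\<exists>C. \<forall>k\<ge>1. r k \<le> C * nu k)"
proof
  assume "limsup (\<lambda>n. ereal ((1 / nu n) * Max (r ` {1..n}))) < \<infinity>"
  then obtain C where "\<And>k. k \<ge> 1 \<Longrightarrow> r k \<le> C * nu k"
    using limsup_Max_div_less_PInfD[of nu r] assms(1) by blast
  then show "\<exists>C. \<forall>k\<ge>1. r k \<le> C * nu k" by blast
next
  assume "\<exists>C. \<forall>k\<ge>1. r k \<le> C * nu k"
  then obtain C where "\<And>k. k \<ge> 1 \<Longrightarrow> r k \<le> C * nu k" by blast
  then show "limsup (\<lambda>n. ereal ((1 / nu n) * Max (r ` {1..n}))) < \<infinity>"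
    using limsup_Max_div_less_PInfI[of nu r C] assms by blast
qed

lemma obtain_least_index_le:
  fixes a :: "nat \<Rightarrow> 'a::linorder"
  assumes "1 \<le> n" "a n \<le> y"
  obtains m where "1 \<le> m" "m \<le> n" "a m \<le> y" "\<And>j. 1 \<le> j \<Longrightarrow> j < m \<Longrightarrow> y < a j"
proof -
  define m where "m = (LEAST m. 1 \<le> m \<and> a m \<le> y)"
  have "1 \<le> m \<and> a m \<le> y" unfolding m_def by (rule LeastI[of _ n]) (use assms in simp)
  moreover have "m \<le> n" unfolding m_def by (rule Least_le) (use assms in simp)
  moreover have "y < a j" if "1 \<le> j" "j < m" for j
    using not_less_Least[of j "\<lambda>m. 1 \<le> m \<and> a m \<le> y"] that by (simp add: m_def not_le)
  ultimately show ?thesis using that by blast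
qed

lemma mult_powr_le_powr:
  fixes k x B p :: real
  assumes "0 < p" "0 \<le> k" "0 \<le> x" "k powr (1 / p) * x \<le> B"
  shows "k * x powr p \<le> B powr p"
proof -
  have "k * x powr p = (k powr (1 / p) * x) powr p"
    using assms by (simp add: powr_mult powr_powr)
  also have "\<dots> \<le> B powr p" using assms by (intro powr_mono2) auto
  finally show ?thesis .
qed

lemma exists_antimono_rearrangement:
  fixes z :: "nat \<Rightarrow> 'a::linorder"
  shows "\<exists>\<sigma>. bij_betw \<sigma> {1..n} {1..n} \<and> antimono_on {1..n} (z \<circ> \<sigma>)"
proof -
  define L where "L = rev (sort_key z [1..<n+1])"
  have len: "length L = n" and dist: "distinct L" and set: "set L = {1..n}"
    by (auto simp: L_def)
  have sorted: "sorted_wrt (\<ge>) (map z L)"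
    unfolding L_def by (simp add: rev_map[symmetric] sorted_wrt_rev)
  define \<sigma> where "\<sigma> i = L ! (i - 1)" for i
  have "bij_betw ((!) L) {..<n} {1..n}" using bij_betw_nth[OF dist] len set by simp
  moreover have "bij_betw (\<lambda>i. i - 1) {1..n} {..<n}"
    by (rule bij_betw_byWitness[of _ "\<lambda>i. i + 1"]) auto
  ultimately have "bij_betw \<sigma> {1..n} {1..n}"
    unfolding \<sigma>_def using bij_betw_trans by (fastforce simp: comp_def)
  moreover have "antimono_on {1..n} (z \<circ> \<sigma>)"
  proof (rule monotone_onI)
    fix i j assume "i \<in> {1..n}" "j \<in> {1..n}" "i \<le> j"
    then show "(z \<circ> \<sigma>) j \<le> (z \<circ> \<sigma>) i"
      using sorted_wrt_nth_less[OF sorted] len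
      by (cases "i = j") (auto simp: \<sigma>_def)
  qed
  ultimately show ?thesis by blast
qed

section \<open>Variation classes\<close>

lemma PhiBV_iff:
  "f \<in> PhiBV phi \<longleftrightarrow> (\<exists>c>0. \<exists>V. \<forall>n a b. nonoverlapping n a b \<longrightarrow>
      (\<Sum>j=1..n. phi j \<bar>c * f (b j) - c * f (a j)\<bar>) \<le> V)"
proof
  assume "f \<in> PhiBV phi"
  then obtain c where c: "c > 0" and "Var_Phi phi (\<lambda>x. c * f x) < \<infinity>"
    unfolding PhiBV_def by blast
  then have "Var_Phi phi (\<lambda>x. c * f x) \<noteq> \<infinity>" by simp
  then obtain V :: nat where V: "Var_Phi phi (\<lambda>x. c * f x) < ereal (real V)"
    unfolding less_PInf_Ex_of_nat ..
  have "(\<Sum>j=1..n. phi j \<bar>c * f (b j) - c * f (a j)\<bar>) \<le> real V" if "nonoverlapping n a b" for n a b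
  proof -
    have "ereal (\<Sum>j=1..n. phi j \<bar>c * f (b j) - c * f (a j)\<bar>) \<le> Var_Phi phi (\<lambda>x. c * f x)"
      unfolding Var_Phi_def by (rule SUP_upper2[of "(n, a, b)"]) (use that in auto)
    then have "ereal (\<Sum>j=1..n. phi j \<bar>c * f (b j) - c * f (a j)\<bar>) \<le> ereal (real V)"
      using V by (rule order_trans[OF _ less_imp_le])
    then show ?thesis by simp
  qed
  then show "\<exists>c>0. \<exists>V. \<forall>n a b. nonoverlapping n a b \<longrightarrow>
      (\<Sum>j=1..n. phi j \<bar>c * f (b j) - c * f (a j)\<bar>) \<le> V"
    using c by blast
next
  assume "\<exists>c>0. \<exists>V. \<forall>n a b. nonoverlapping n a b \<longrightarrow>
      (\<Sum>j=1..n. phi j \<bar>c * f (b j) - c * f (a j)\<bar>) \<le> V"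
  then obtain c V where c: "c > 0" and V: "\<And>n a b. nonoverlapping n a b \<Longrightarrow>
      (\<Sum>j=1..n. phi j \<bar>c * f (b j) - c * f (a j)\<bar>) \<le> V"
    by blast
  have "Var_Phi phi (\<lambda>x. c * f x) \<le> ereal V"
    unfolding Var_Phi_def using V by (intro SUP_least) auto
  then have "Var_Phi phi (\<lambda>x. c * f x) < \<infinity>" using le_less_trans[of _ "ereal V" \<infinity>] by simp
  then show "f \<in> PhiBV phi" unfolding PhiBV_def using c by blast
qed

lemma upsilon_p_ge:
  "nonoverlapping n a b \<Longrightarrow>
    ereal ((\<Sum>j=1..n. \<bar>f (b j) - f (a j)\<bar> powr p) powr (1 / p)) \<le> upsilon_p p n f"
  unfolding upsilon_p_def by (rule SUP_upper2[of "(a, b)"]) auto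

lemma upsilon_p_le:
  assumes p: "p > 0" and S: "0 \<le> S"
    and sums: "\<And>a b. nonoverlapping n a b \<Longrightarrow> (\<Sum>j=1..n. \<bar>f (b j) - f (a j)\<bar> powr p) \<le> S powr p"
  shows "upsilon_p p n f \<le> ereal S"
  unfolding upsilon_p_def
proof (rule SUP_least, clarify)
  fix a b assume "nonoverlapping n a b"
  then have "(\<Sum>j=1..n. \<bar>f (b j) - f (a j)\<bar> powr p) powr (1 / p) \<le> (S powr p) powr (1 / p)"
    using sums p by (intro powr_mono2) (auto intro: sum_nonneg)
  also have "\<dots> = S" using p S by (simp add: powr_powr)
  finally show "ereal ((\<Sum>j=1..n. \<bar>f (b j) - f (a j)\<bar> powr p) powr (1 / p)) \<le> ereal S" by simp
qed

lemma V_pI: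
  assumes "bounded (f ` {0..1})" and nu_pos: "\<And>n. n \<ge> 1 \<Longrightarrow> 0 < nu n"
    and upsilon: "\<And>n. n \<ge> 1 \<Longrightarrow> upsilon_p p n f \<le> ereal (K * nu n)"
  shows "f \<in> V_p p nu"
proof -
  have "upsilon_p p n f / ereal (nu n) \<le> ereal K" if "n \<ge> 1" for n
    using upsilon[OF that] nu_pos[OF that] by (simp add: ereal_divide_le_pos mult.commute)
  then have "(SUP n\<in>{1..}. upsilon_p p n f / ereal (nu n)) \<le> ereal K"
    by (intro SUP_least) auto
  then show ?thesis
    unfolding V_p_def using assms(1) le_less_trans[of _ "ereal K" \<infinity>] by simp
qed

lemma V_pD:
  assumes "f \<in> V_p p nu" and nu_pos: "\<And>n. n \<ge> 1 \<Longrightarrow> 0 < nu n"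
  obtains K where "\<And>n. n \<ge> 1 \<Longrightarrow> upsilon_p p n f \<le> ereal (K * nu n)"
proof -
  have "(SUP n\<in>{1..}. upsilon_p p n f / ereal (nu n)) \<noteq> \<infinity>"
    using assms(1) unfolding V_p_def by simp
  then obtain K :: nat where K: "(SUP n\<in>{1..}. upsilon_p p n f / ereal (nu n)) < ereal (real K)"
    unfolding less_PInf_Ex_of_nat ..
  have "upsilon_p p n f \<le> ereal (real K * nu n)" if n: "n \<ge> 1" for n
  proof -
    have "upsilon_p p n f / ereal (nu n) \<le> (SUP n\<in>{1..}. upsilon_p p n f / ereal (nu n))"
      using n by (intro SUP_upper) auto
    then have "upsilon_p p n f / ereal (nu n) \<le> ereal (real K)" using K by simp
    then show ?thesis using nu_pos[OF n] by (simp add: ereal_divide_le_pos mult.commute)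
  qed
  then show ?thesis using that by blast
qed

lemma nonoverlapping_permute:
  assumes "nonoverlapping n a b" "bij_betw \<sigma> {1..n} {1..n}"
  shows "nonoverlapping n (a \<circ> \<sigma>) (b \<circ> \<sigma>)"
proof -
  have "\<sigma> j \<in> {1..n}" if "j \<in> {1..n}" for j using assms(2) that by (auto dest: bij_betwE)
  moreover have "\<sigma> i \<noteq> \<sigma> j" if "i \<in> {1..n}" "j \<in> {1..n}" "i \<noteq> j" for i j
    using assms(2) that unfolding bij_betw_def inj_on_def by blast
  ultimately show ?thesis using assms(1) unfolding nonoverlapping_def by (simp; blast)
qed

lemma nonoverlapping_inj_on:
  assumes "nonoverlapping n a b"
  shows "inj_on a {j\<in>{1..n}. a j < b j}" and "inj_on b {j\<in>{1..n}. a j < b j}"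
proof -
  have sep: "b i \<le> a j \<or> b j \<le> a i" if "i \<in> {1..n}" "j \<in> {1..n}" "i \<noteq> j" for i j
    using assms that unfolding nonoverlapping_def by blast
  show "inj_on a {j\<in>{1..n}. a j < b j}"
  proof (rule inj_onI, rule ccontr)
    fix i j assume "i \<in> {j\<in>{1..n}. a j < b j}" "j \<in> {j\<in>{1..n}. a j < b j}" "a i = a j" "i \<noteq> j"
    then show False using sep[of i j] by auto
  qed
  show "inj_on b {j\<in>{1..n}. a j < b j}"
  proof (rule inj_onI, rule ccontr)
    fix i j assume "i \<in> {j\<in>{1..n}. a j < b j}" "j \<in> {j\<in>{1..n}. a j < b j}" "b i = b j" "i \<noteq> j"
    then show False using sep[of i j] by auto
  qed
qed

section \<open>\<open>Phi\<close>-sequences\<close>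

locale Phi_seq =
  fixes phi :: "nat \<Rightarrow> real \<Rightarrow> real"
  assumes Phi_sequence: "Phi_sequence phi"
begin

lemma
  assumes "j \<ge> 1"
  shows phi_mono_on: "mono_on {0..} (phi j)"
    and phi_convex_on: "convex_on {0..} (phi j)"
    and phi_zero: "phi j 0 = 0"
    and phi_pos: "0 < x \<Longrightarrow> 0 < phi j x"
    and phi_Suc_le: "0 < x \<Longrightarrow> phi (Suc j) x \<le> phi j x"
  using Phi_sequence assms unfolding Phi_sequence_def by simp_all

lemma phi_mono: "j \<ge> 1 \<Longrightarrow> 0 \<le> s \<Longrightarrow> s \<le> t \<Longrightarrow> phi j s \<le> phi j t"
  using mono_onD[OF phi_mono_on, of j s t] by simp

lemma phi_nonneg: "j \<ge> 1 \<Longrightarrow> 0 \<le> x \<Longrightarrow> 0 \<le> phi j x"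
  using phi_mono[of j 0 x] phi_zero by simp

lemma phi_antimono_index:
  assumes "j \<ge> 1" "j \<le> i" "0 \<le> x"
  shows "phi i x \<le> phi j x"
  using assms(2)
proof (induction i rule: dec_induct)
  case (step i)
  have "phi (Suc i) x \<le> phi i x"
    using phi_Suc_le[of i x] phi_zero[of i] phi_zero[of "Suc i"] step assms by (cases "x = 0") auto
  then show ?case using step by simp
qed simp

lemma phi_scale_le:
  assumes "j \<ge> 1" "0 \<le> t" "t \<le> 1" "0 \<le> x"
  shows "phi j (t * x) \<le> t * phi j x"
proof -
  have "phi j ((1 - t) *\<^sub>R 0 + t *\<^sub>R x) \<le> (1 - t) * phi j 0 + t * phi j x"
    using assms by (intro convex_onD[OF phi_convex_on]) auto
  then show ?thesis using phi_zero[OF assms(1)] by simp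
qed

lemma phi_ge_linear:
  assumes "j \<ge> 1" "1 \<le> x"
  shows "x * phi j 1 \<le> phi j x"
  using phi_scale_le[OF assms(1), of "1 / x" x] assms(2) by (simp add: field_simps)

lemma phi_strict_mono:
  assumes "j \<ge> 1" "0 \<le> s" "s < t"
  shows "phi j s < phi j t"
proof -
  have "phi j s = phi j ((s / t) * t)" using assms by simp
  also have "\<dots> \<le> (s / t) * phi j t" using assms by (intro phi_scale_le) auto
  also have "\<dots> < phi j t" using assms phi_pos[OF assms(1), of t] by (simp add: field_simps)
  finally show ?thesis .
qed

lemma Phi_n_Suc: "Phi_n phi (Suc k) x = Phi_n phi k x + phi (Suc k) x"
  unfolding Phi_n_def by simp

lemma Phi_n_zero: "Phi_n phi k 0 = 0"
  unfolding Phi_n_def using phi_zero by simp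

lemma Phi_n_nonneg: "0 \<le> x \<Longrightarrow> 0 \<le> Phi_n phi k x"
  unfolding Phi_n_def by (intro sum_nonneg phi_nonneg) auto

lemma Phi_n_mono: "0 \<le> s \<Longrightarrow> s \<le> t \<Longrightarrow> Phi_n phi k s \<le> Phi_n phi k t"
  unfolding Phi_n_def by (intro sum_mono phi_mono) auto

lemma Phi_n_strict_mono:
  assumes "k \<ge> 1" "0 \<le> s" "s < t"
  shows "Phi_n phi k s < Phi_n phi k t"
  unfolding Phi_n_def
proof (rule sum_strict_mono_ex1)
  show "\<forall>j\<in>{1..k}. phi j s \<le> phi j t" using assms by (auto intro!: phi_mono)
  show "\<exists>j\<in>{1..k}. phi j s < phi j t" using assms by (intro bexI[of _ 1] phi_strict_mono) auto
qed simp

lemma Phi_n_le_iff: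
  assumes "k \<ge> 1" "0 \<le> s" "0 \<le> t"
  shows "Phi_n phi k s \<le> Phi_n phi k t \<longleftrightarrow> s \<le> t"
  using Phi_n_strict_mono[OF assms(1) assms(3), of s] Phi_n_mono[OF assms(2), of t k] by force

lemma Phi_n_scale_le: "0 \<le> t \<Longrightarrow> t \<le> 1 \<Longrightarrow> 0 \<le> x \<Longrightarrow> Phi_n phi k (t * x) \<le> t * Phi_n phi k x"
  unfolding Phi_n_def sum_distrib_left by (intro sum_mono phi_scale_le) auto

lemma Phi_n_mono_index: "k \<le> m \<Longrightarrow> 0 \<le> x \<Longrightarrow> Phi_n phi k x \<le> Phi_n phi m x"
  unfolding Phi_n_def by (intro sum_mono2) (auto intro: phi_nonneg)

lemma Phi_n_continuous_on: "continuous_on {0<..} (Phi_n phi k)"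
proof -
  have "continuous_on {0<..} (phi j)" if "j \<ge> 1" for j
  proof (rule convex_on_continuous)
    show "convex_on {0<..} (phi j)"
      using phi_convex_on[OF that] by (rule convex_on_subset) auto
  qed auto
  then show ?thesis unfolding Phi_n_def by (intro continuous_on_sum) auto
qed

lemma Phi_n_average_antimono:
  assumes "k \<le> m" "0 \<le> x"
  shows "real k * Phi_n phi m x \<le> real m * Phi_n phi k x"
  using assms(1)
proof (induction m rule: dec_induct)
  case (step m)
  have "real (card {1..k}) * phi (Suc m) x \<le> (\<Sum>j=1..k. phi j x)"
    using step assms by (intro sum_bounded_below) (auto intro!: phi_antimono_index)
  then show ?case using step by (simp add: Phi_n_Suc Phi_n_def algebra_simps)
qed simp

lemma sum_phi_le_Phi_n_card:
  assumes "finite S" "S \<subseteq> {1..}" "0 \<le> x"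
  shows "(\<Sum>j\<in>S. phi j x) \<le> Phi_n phi (card S) x"
  using assms
proof (induction "card S" arbitrary: S)
  case 0
  then show ?case by (simp add: Phi_n_def)
next
  case (Suc n)
  note card_S = \<open>Suc n = card S\<close>
  define m where "m = Max S"
  have "S \<noteq> {}" using card_S by auto
  then have m: "m \<in> S" "card (S - {m}) = n" using card_S Suc.prems(1) by (simp_all add: m_def)
  have "card S \<le> card {1..m}" using Suc.prems \<open>S \<noteq> {}\<close> by (intro card_mono) (auto simp: m_def)
  then have "phi m x \<le> phi (Suc n) x" using card_S Suc.prems(3) by (intro phi_antimono_index) auto
  moreover have "(\<Sum>j\<in>S - {m}. phi j x) \<le> Phi_n phi n x"
    using Suc.hyps(1)[of "S - {m}"] Suc.prems m(2) by (simp add: subset_iff)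
  ultimately show ?case
    using Suc.prems(1) m(1) by (simp add: sum.remove Phi_n_Suc flip: card_S)
qed

lemma Phi_n_inv:
  assumes k: "k \<ge> 1" and y: "0 < y"
  shows "0 < Phi_n_inv phi k y" and "Phi_n phi k (Phi_n_inv phi k y) = y"
proof -
  txt \<open>The intermediate value theorem is applied on \<open>[e, R]\<close> with \<open>e > 0\<close>, since continuity
    is only available on the open half-line.\<close>
  define e where "e = min 1 (y / (Phi_n phi k 1 + 1))"
  define R where "R = max 1 (y / phi 1 1)"
  have P1: "0 \<le> Phi_n phi k 1" by (simp add: Phi_n_nonneg)
  have e: "0 < e" "e \<le> 1" using P1 y by (auto simp: e_def)
  have "Phi_n phi k (e * 1) \<le> e * Phi_n phi k 1" using e by (intro Phi_n_scale_le) auto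
  also have "\<dots> \<le> y"
    using P1 y by (auto simp: e_def min_def field_simps)
  finally have below: "Phi_n phi k e \<le> y" by simp
  have "y / phi 1 1 \<le> R" by (simp add: R_def)
  then have "y \<le> R * phi 1 1" using phi_pos[of 1 1] by (simp add: pos_divide_le_eq)
  also have "\<dots> \<le> phi 1 R" by (intro phi_ge_linear) (auto simp: R_def)
  also have "\<dots> = Phi_n phi 1 R" by (simp add: Phi_n_def)
  also have "\<dots> \<le> Phi_n phi k R" using k by (intro Phi_n_mono_index) (auto simp: R_def)
  finally have above: "y \<le> Phi_n phi k R" .
  have eR: "e \<le> R" using e by (simp add: R_def)
  have "continuous_on {e..R} (Phi_n phi k)"
    using Phi_n_continuous_on by (rule continuous_on_subset) (use e in auto)
  then obtain x where x: "e \<le> x" "Phi_n phi k x = y"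
    using IVT'[OF below above eR] by blast
  have "Phi_n_inv phi k y = x"
    unfolding Phi_n_inv_def
  proof (rule the_equality)
    fix x' assume "0 \<le> x' \<and> Phi_n phi k x' = y"
    then show "x' = x" using x e Phi_n_le_iff[OF k, of x x'] Phi_n_le_iff[OF k, of x' x] by auto
  qed (use x e in auto)
  then show "0 < Phi_n_inv phi k y" and "Phi_n phi k (Phi_n_inv phi k y) = y"
    using x e by auto
qed

lemma le_Phi_n_inv_iff:
  assumes "k \<ge> 1" "0 < y" "0 \<le> x"
  shows "x \<le> Phi_n_inv phi k y \<longleftrightarrow> Phi_n phi k x \<le> y"
  using Phi_n_le_iff[of k x "Phi_n_inv phi k y"] Phi_n_inv[of k y] assms by auto

lemma Phi_n_inv_le_iff:
  assumes "k \<ge> 1" "0 < y" "0 \<le> x"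
  shows "Phi_n_inv phi k y \<le> x \<longleftrightarrow> y \<le> Phi_n phi k x"
  using Phi_n_le_iff[of k "Phi_n_inv phi k y" x] Phi_n_inv[of k y] assms by auto

section \<open>Sufficiency\<close>

lemma powr_diff_le_Phi_n_diff:
  assumes p: "1 \<le> p" and y: "0 \<le> y" "y \<le> x" and B: "0 \<le> B"
    and bound: "real k * x powr p \<le> B * Phi_n phi k x"
  shows "real k * (x powr p - y powr p) \<le> p * B * (Phi_n phi k x - Phi_n phi k y)"
proof (cases "x = 0")
  case True
  then show ?thesis using y by simp
next
  case False
  define t where "t = y / x"
  have t: "0 \<le> t" "t \<le> 1" and y_eq: "y = t * x" using y False by (auto simp: t_def)
  have "real k * (x powr p - y powr p) = (real k * x powr p) * (1 - t powr p)"
    using t y by (simp add: y_eq powr_mult algebra_simps)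
  also have "\<dots> \<le> (real k * x powr p) * (p * (1 - t))"
    using one_minus_powr_le[OF p t] by (intro mult_left_mono) auto
  also have "\<dots> \<le> (B * Phi_n phi k x) * (p * (1 - t))"
    using bound t p by (intro mult_right_mono) auto
  also have "\<dots> = p * B * ((1 - t) * Phi_n phi k x)" by (simp add: algebra_simps)
  also have "\<dots> \<le> p * B * (Phi_n phi k x - Phi_n phi k y)"
    using Phi_n_scale_le[OF t, of x k] y p B
    by (intro mult_left_mono) (auto simp: y_eq algebra_simps)
  finally show ?thesis .
qed

lemma sum_powr_le_sum_phi_Abel:
  assumes p: "1 \<le> p" and B: "0 \<le> B"
    and x: "\<forall>k\<in>{1..K}. 0 \<le> x k" "antimono_on {1..K} x"
    and bound: "\<forall>k\<in>{1..K}. real k * x k powr p \<le> B * Phi_n phi k (x k)"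
    and y: "0 \<le> y" "\<forall>k\<in>{1..K}. y \<le> x k"
  shows "(\<Sum>k=1..K. x k powr p) - real K * y powr p
    \<le> p * B * ((\<Sum>j=1..K. phi j (x j)) - Phi_n phi K y)"
  using x bound y
proof (induction K arbitrary: y)
  case 0
  then show ?case by (simp add: Phi_n_def)
next
  case (Suc K)
  have x_Suc: "x (Suc K) \<le> x k" if "k \<in> {1..K}" for k
    using monotone_onD[OF Suc.prems(2)] that by auto
  have IH: "(\<Sum>k=1..K. x k powr p) - real K * x (Suc K) powr p
      \<le> p * B * ((\<Sum>j=1..K. phi j (x j)) - Phi_n phi K (x (Suc K)))"
    using Suc.prems x_Suc by (intro Suc.IH) (auto elim: monotone_on_subset)
  have step: "real (Suc K) * (x (Suc K) powr p - y powr p)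
      \<le> p * B * (Phi_n phi (Suc K) (x (Suc K)) - Phi_n phi (Suc K) y)"
    using Suc.prems B p bspec[OF Suc.prems(3), of "Suc K"]
    by (intro powr_diff_le_Phi_n_diff) auto
  show ?case using IH step by (simp add: Phi_n_Suc algebra_simps)
qed

lemma scaled_powr_le_Phi_n:
  assumes p: "1 \<le> p" and k: "k \<in> {1..n}"
    and E: "\<forall>j\<in>{1..n}. real j * Phi_n_inv phi j 1 powr p \<le> E"
    and y: "Phi_n_inv phi n 1 \<le> y" "Phi_n phi k y \<le> 1"
  shows "real k * y powr p \<le> 2 * E * Phi_n phi k y"
proof -
  define a where "a j = Phi_n_inv phi j 1" for j
  have aE: "real j * a j powr p \<le> E" if "j \<in> {1..n}" for j using E that by (simp add: a_def)
  have y0: "0 \<le> y" using Phi_n_inv(1)[of n 1] k y(1) by simp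
  have "0 \<le> real n * a n powr p" by simp
  also have "\<dots> \<le> E" using aE k by simp
  finally have E0: "0 \<le> E" .
  have yak: "y \<le> a k" using le_Phi_n_inv_iff[of k 1 y] k y0 y(2) by (simp add: a_def)
  obtain m where m: "1 \<le> m" "m \<le> n" "a m \<le> y" and below_m: "\<And>j. 1 \<le> j \<Longrightarrow> j < m \<Longrightarrow> y < a j"
    using obtain_least_index_le[of n a y] k y(1) by (auto simp: a_def)
  have Phi_m: "1 \<le> Phi_n phi m y" using Phi_n_inv_le_iff[of m 1 y] m y0 by (simp add: a_def)
  show ?thesis
  proof (cases "m \<le> k")
    case True
    have "real k * y powr p \<le> real k * a k powr p"
      using yak y0 p by (intro mult_left_mono powr_mono2) auto
    also have "\<dots> \<le> 2 * E * 1" using aE[OF k] E0 by simp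
    also have "\<dots> \<le> 2 * E * Phi_n phi k y"
      using Phi_m Phi_n_mono_index[OF True y0] E0 by (intro mult_left_mono) auto
    finally show ?thesis .
  next
    case False
    txt \<open>The averaging inequality for \<open>Phi_n\<close> trades the index \<open>k\<close> for \<open>m\<close>.\<close>
    have m2: "2 \<le> m" and m_pred: "m - 1 \<in> {1..n}" using False k m by auto
    have "real k * 1 \<le> real k * Phi_n phi m y" using Phi_m by (intro mult_left_mono) auto
    also have "\<dots> \<le> real m * Phi_n phi k y" using False y0 by (intro Phi_n_average_antimono) auto
    finally have k_le: "real k \<le> real m * Phi_n phi k y" by simp
    have "y < a (m - 1)" using below_m[of "m - 1"] m2 by simp
    then have "real m * y powr p \<le> (2 * real (m - 1)) * a (m - 1) powr p"
      using m2 y0 p by (intro mult_mono powr_mono2) (auto simp: of_nat_diff)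
    also have "\<dots> \<le> 2 * E" using aE[OF m_pred] by simp
    finally have "real k * (real m * y powr p) \<le> real k * (2 * E)" by (intro mult_left_mono) auto
    also have "\<dots> \<le> (real m * Phi_n phi k y) * (2 * E)" using k_le E0 by (intro mult_right_mono) simp_all
    finally show ?thesis using m2 by (simp add: algebra_simps)
  qed
qed

lemma Phi_n_le_sum_phi_of_antimono:
  assumes x: "\<forall>j\<in>{1..n}. 0 \<le> x j" "antimono_on {1..n} x" and k: "k \<in> {1..n}"
  shows "Phi_n phi k (x k) \<le> (\<Sum>j=1..n. phi j (x j))"
proof -
  have "Phi_n phi k (x k) \<le> (\<Sum>j=1..k. phi j (x j))"
    unfolding Phi_n_def using k x(1) monotone_onD[OF x(2)] by (intro sum_mono phi_mono) auto
  also have "\<dots> \<le> (\<Sum>j=1..n. phi j (x j))"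
    using k x(1) by (intro sum_mono2) (auto intro: phi_nonneg)
  finally show ?thesis .
qed

lemma sum_powr_le_of_sum_phi_le_one:
  assumes p: "1 \<le> p" and n: "n \<ge> 1"
    and E: "\<forall>k\<in>{1..n}. real k * Phi_n_inv phi k 1 powr p \<le> E"
    and x: "\<forall>k\<in>{1..n}. 0 \<le> x k" "antimono_on {1..n} x"
    and sum_phi: "(\<Sum>j=1..n. phi j (x j)) \<le> 1"
  shows "(\<Sum>j=1..n. x j powr p) \<le> (2 * p + 1) * E"
proof -
  define a where "a = Phi_n_inv phi n 1"
  txt \<open>The increments below \<open>a\<close> contribute at most \<open>n * a powr p \<le> E\<close>.\<close>
  define x' where "x' k = (if a \<le> x k then x k else 0)" for k
  have nE: "real n * a powr p \<le> E" using E n by (simp add: a_def)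
  have "0 \<le> real n * a powr p" by simp
  then have E0: "0 \<le> E" using nE by linarith
  have x'_nonneg: "\<forall>k\<in>{1..n}. 0 \<le> x' k" using x(1) by (simp add: x'_def)
  have x'_antimono: "antimono_on {1..n} x'"
    using x by (auto simp: x'_def intro!: monotone_onI dest: monotone_onD)
  have x'_le: "x' k \<le> x k" if "k \<in> {1..n}" for k using x(1) that by (simp add: x'_def)
  have bound: "\<forall>k\<in>{1..n}. real k * x' k powr p \<le> (2 * E) * Phi_n phi k (x' k)"
  proof
    fix k assume k: "k \<in> {1..n}"
    show "real k * x' k powr p \<le> (2 * E) * Phi_n phi k (x' k)"
    proof (cases "a \<le> x k")
      case True
      have "Phi_n phi k (x k) \<le> 1" using Phi_n_le_sum_phi_of_antimono[OF x k] sum_phi by simp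
      then show ?thesis
        using scaled_powr_le_Phi_n[OF p k E] True by (simp add: x'_def a_def)
    next
      case False
      then show ?thesis using E0 Phi_n_nonneg[of 0 k] p by (simp add: x'_def)
    qed
  qed
  have "(\<Sum>k=1..n. x' k powr p) - real n * 0 powr p
      \<le> p * (2 * E) * ((\<Sum>j=1..n. phi j (x' j)) - Phi_n phi n 0)"
    using x'_nonneg x'_antimono bound E0 p by (intro sum_powr_le_sum_phi_Abel) auto
  also have "\<dots> \<le> p * (2 * E) * 1"
  proof -
    have "(\<Sum>j=1..n. phi j (x' j)) \<le> (\<Sum>j=1..n. phi j (x j))"
      using x'_nonneg x'_le by (intro sum_mono phi_mono) auto
    then show ?thesis using sum_phi p E0 by (intro mult_left_mono) (auto simp: Phi_n_zero)
  qed
  finally have x'_sum: "(\<Sum>k=1..n. x' k powr p) \<le> 2 * p * E" using p by simp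
  have "(\<Sum>j=1..n. x j powr p) \<le> (\<Sum>j=1..n. x' j powr p + a powr p)"
    using x(1) p by (intro sum_mono) (auto simp: x'_def intro: powr_mono2)
  also have "\<dots> = (\<Sum>j=1..n. x' j powr p) + real n * a powr p" by (simp add: sum.distrib)
  finally show ?thesis using x'_sum nE by (simp add: algebra_simps)
qed

lemma sum_powr_le_of_rearrangements:
  assumes p: "1 \<le> p" and n: "n \<ge> 1"
    and E: "\<forall>k\<in>{1..n}. real k * Phi_n_inv phi k 1 powr p \<le> E"
    and z: "\<forall>j\<in>{1..n}. 0 \<le> z j"
    and sum_phi: "\<And>\<sigma>. bij_betw \<sigma> {1..n} {1..n} \<Longrightarrow> (\<Sum>j=1..n. phi j (z (\<sigma> j))) \<le> 1"
  shows "(\<Sum>j=1..n. z j powr p) \<le> (2 * p + 1) * E"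
proof -
  obtain \<sigma> where \<sigma>: "bij_betw \<sigma> {1..n} {1..n}" and antimono: "antimono_on {1..n} (z \<circ> \<sigma>)"
    using exists_antimono_rearrangement by blast
  have "(\<Sum>j=1..n. z j powr p) = (\<Sum>j=1..n. (z \<circ> \<sigma>) j powr p)"
    using sum.reindex_bij_betw[OF \<sigma>, of "\<lambda>j. z j powr p"] by simp
  also have "\<dots> \<le> (2 * p + 1) * E"
    using z \<sigma> sum_phi[OF \<sigma>] by (intro sum_powr_le_of_sum_phi_le_one[OF p n E _ antimono])
      (auto dest: bij_betwE)
  finally show ?thesis .
qed

lemma PhiBV_normalize:
  assumes "f \<in> PhiBV phi"
  obtains c where "c > 0"
    "\<And>n a b. nonoverlapping n a b \<Longrightarrow> (\<Sum>j=1..n. phi j \<bar>c * f (b j) - c * f (a j)\<bar>) \<le> 1"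
proof -
  obtain c V where c: "c > 0" and V: "\<And>n a b. nonoverlapping n a b \<Longrightarrow>
      (\<Sum>j=1..n. phi j \<bar>c * f (b j) - c * f (a j)\<bar>) \<le> V"
    using assms unfolding PhiBV_iff by blast
  define M where "M = max 1 V"
  have M: "1 \<le> M" "V \<le> M" by (auto simp: M_def)
  have "(\<Sum>j=1..n. phi j \<bar>c / M * f (b j) - c / M * f (a j)\<bar>) \<le> 1" if ab: "nonoverlapping n a b"
    for n a b
  proof -
    have "phi j \<bar>c / M * f (b j) - c / M * f (a j)\<bar> \<le> (1 / M) * phi j \<bar>c * f (b j) - c * f (a j)\<bar>"
      if "j \<in> {1..n}" for j
    proof -
      have "c / M * f (b j) - c / M * f (a j) = (1 / M) * (c * f (b j) - c * f (a j))"
        by (simp add: algebra_simps)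
      then have eq: "\<bar>c / M * f (b j) - c / M * f (a j)\<bar> = (1 / M) * \<bar>c * f (b j) - c * f (a j)\<bar>"
        using M unfolding abs_mult by simp
      show ?thesis unfolding eq using M that by (intro phi_scale_le) auto
    qed
    then have "(\<Sum>j=1..n. phi j \<bar>c / M * f (b j) - c / M * f (a j)\<bar>)
        \<le> (1 / M) * (\<Sum>j=1..n. phi j \<bar>c * f (b j) - c * f (a j)\<bar>)"
      unfolding sum_distrib_left by (rule sum_mono)
    also have "\<dots> \<le> (1 / M) * M" using V[OF ab] M by (intro mult_left_mono) auto
    finally show ?thesis using M by simp
  qed
  moreover have "c / M > 0" using c M by simp
  ultimately show ?thesis using that by blast
qed

lemma PhiBV_bounded:
  assumes "f \<in> PhiBV phi"
  shows "bounded (f ` {0..1})"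
proof -
  obtain c where c: "c > 0" and normalized: "\<And>n a b. nonoverlapping n a b \<Longrightarrow>
      (\<Sum>j=1..n. phi j \<bar>c * f (b j) - c * f (a j)\<bar>) \<le> 1"
    using PhiBV_normalize[OF assms] by blast
  define R where "R = max 1 (1 / phi 1 1)"
  have "c * \<bar>f x - f 0\<bar> \<le> R" if x: "x \<in> {0..1}" for x
  proof (cases "c * \<bar>f x - f 0\<bar> \<le> 1")
    case False
    have "nonoverlapping 1 (\<lambda>_. 0) (\<lambda>_. x)" using x by (simp add: nonoverlapping_def)
    from normalized[OF this] have "phi 1 (c * \<bar>f x - f 0\<bar>) \<le> 1"
      using c by (simp add: abs_mult flip: right_diff_distrib)
    moreover have "c * \<bar>f x - f 0\<bar> * phi 1 1 \<le> phi 1 (c * \<bar>f x - f 0\<bar>)"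
      using False by (intro phi_ge_linear) auto
    ultimately have "c * \<bar>f x - f 0\<bar> \<le> 1 / phi 1 1"
      using phi_pos[of 1 1] by (simp add: pos_le_divide_eq)
    then show ?thesis by (simp add: R_def)
  qed (simp add: R_def)
  then have "\<bar>f x - f 0\<bar> \<le> R / c" if "x \<in> {0..1}" for x
    using that c by (simp add: pos_le_divide_eq mult.commute)
  then have "norm (f x) \<le> \<bar>f 0\<bar> + R / c" if "x \<in> {0..1}" for x
    using that by fastforce
  then show ?thesis unfolding bounded_iff by blast
qed

lemma sum_powr_increments_le:
  assumes p: "1 \<le> p" and n: "n \<ge> 1"
    and B: "\<forall>k\<in>{1..n}. real k powr (1 / p) * Phi_n_inv phi k 1 \<le> B"
    and g: "\<And>a b. nonoverlapping n a b \<Longrightarrow> (\<Sum>j=1..n. phi j \<bar>g (b j) - g (a j)\<bar>) \<le> 1"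
    and ab: "nonoverlapping n a b"
  shows "(\<Sum>j=1..n. \<bar>g (b j) - g (a j)\<bar> powr p) \<le> (2 * p + 1) * B powr p"
proof (rule sum_powr_le_of_rearrangements[OF p n])
  show "\<forall>k\<in>{1..n}. real k * Phi_n_inv phi k 1 powr p \<le> B powr p"
  proof
    fix k assume k: "k \<in> {1..n}"
    then show "real k * Phi_n_inv phi k 1 powr p \<le> B powr p"
      using mult_powr_le_powr[of p "real k" "Phi_n_inv phi k 1" B] B p Phi_n_inv(1)[of k 1] by auto
  qed
  show "(\<Sum>j=1..n. phi j \<bar>g (b (\<sigma> j)) - g (a (\<sigma> j))\<bar>) \<le> 1" if "bij_betw \<sigma> {1..n} {1..n}" for \<sigma>
    using g[OF nonoverlapping_permute[OF ab that]] by simp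
qed simp

lemma PhiBV_subset_V_p:
  assumes p: "1 \<le> p" and nu_pos: "\<And>n. n \<ge> 1 \<Longrightarrow> 0 < nu n" and nu_mono: "mono_on {1..} nu"
    and C: "\<And>k. k \<ge> 1 \<Longrightarrow> real k powr (1 / p) * Phi_n_inv phi k 1 \<le> C * nu k"
  shows "PhiBV phi \<subseteq> V_p p nu"
proof
  fix f assume f: "f \<in> PhiBV phi"
  obtain c where c: "c > 0" and normalized: "\<And>n a b. nonoverlapping n a b \<Longrightarrow>
      (\<Sum>j=1..n. phi j \<bar>c * f (b j) - c * f (a j)\<bar>) \<le> 1"
    using PhiBV_normalize[OF f] by blast
  have C0: "0 \<le> C"
    using C[of 1] nu_pos[of 1] Phi_n_inv(1)[of 1 1] zero_le_mult_iff[of C "nu 1"] by simp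
  define K where "K = (2 * p + 1) powr (1 / p) * C / c"
  have "upsilon_p p n f \<le> ereal (K * nu n)" if n: "n \<ge> 1" for n
  proof (rule upsilon_p_le)
    show "0 < p" "0 \<le> K * nu n" using p c C0 nu_pos[OF n] by (auto simp: K_def)
    fix a b assume ab: "nonoverlapping n a b"
    have B: "\<forall>k\<in>{1..n}. real k powr (1 / p) * Phi_n_inv phi k 1 \<le> C * nu n"
    proof
      fix k assume k: "k \<in> {1..n}"
      have "C * nu k \<le> C * nu n" using k C0 by (intro mult_left_mono mono_onD[OF nu_mono]) auto
      then show "real k powr (1 / p) * Phi_n_inv phi k 1 \<le> C * nu n" using C[of k] k by simp
    qed
    have "f (b j) - f (a j) = 1 / c * (c * f (b j) - c * f (a j))" for j
      using c by (simp add: field_simps)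
    then have "(\<Sum>j=1..n. \<bar>f (b j) - f (a j)\<bar> powr p)
        = (1 / c) powr p * (\<Sum>j=1..n. \<bar>c * f (b j) - c * f (a j)\<bar> powr p)"
      using c by (simp only: sum_abs_powr_scale less_imp_le zero_le_divide_1_iff)
    also have "\<dots> \<le> (1 / c) powr p * ((2 * p + 1) * (C * nu n) powr p)"
      using sum_powr_increments_le[OF p n B normalized ab] by (intro mult_left_mono) auto
    also have "\<dots> = (1 / c) powr p * (((2 * p + 1) powr (1 / p)) powr p * (C * nu n) powr p)"
      using p by (simp add: powr_powr)
    also have "\<dots> = (1 / c * ((2 * p + 1) powr (1 / p) * (C * nu n))) powr p"
      using powr_mult[of "1 / c" "(2 * p + 1) powr (1 / p) * (C * nu n)" p]
        powr_mult[of "(2 * p + 1) powr (1 / p)" "C * nu n" p] c C0 nu_pos[OF n]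
      by simp
    also have "\<dots> = (K * nu n) powr p" by (simp add: K_def mult.assoc)
    finally show "(\<Sum>j=1..n. \<bar>f (b j) - f (a j)\<bar> powr p) \<le> (K * nu n) powr p" .
  qed
  then show "f \<in> V_p p nu" using V_pI[of f nu p K, OF PhiBV_bounded[OF f] nu_pos] by blast
qed

end

section \<open>Necessity\<close>

definition spike_point :: "nat \<Rightarrow> real" where
  "spike_point m = 1 / (real m + 1)"

text \<open>Block \<open>i\<close> of \<open>spike_function k h\<close> consists of \<open>k i\<close> spikes of height \<open>h i\<close>; the \<open>l\<close>-th
  of them sits at \<open>spike_point (prod_encode (i, l))\<close>.\<close>
definition spike_function :: "(nat \<Rightarrow> nat) \<Rightarrow> (nat \<Rightarrow> real) \<Rightarrow> real \<Rightarrow> real" where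
  "spike_function k h t =
    (if t \<in> range spike_point then
       (case prod_decode (inv spike_point t) of (i, l) \<Rightarrow> if l < k i then h i else 0)
     else 0)"

lemma spike_point_strict_antimono: "l < m \<Longrightarrow> spike_point m < spike_point l"
  unfolding spike_point_def by (simp add: frac_less2)

lemma spike_point_antimono: "l \<le> m \<Longrightarrow> spike_point m \<le> spike_point l"
  unfolding spike_point_def by (simp add: frac_le)

lemma inj_spike_point: "inj spike_point"
  by (rule injI) (metis linorder_neqE_nat less_irrefl spike_point_strict_antimono)

lemma spike_point_pos: "0 < spike_point m"
  and spike_point_le_one: "spike_point m \<le> 1"
  unfolding spike_point_def by auto

lemma spike_function_spike_point:
  "spike_function k h (spike_point m) = (case prod_decode m of (i, l) \<Rightarrow> if l < k i then h i else 0)"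
  unfolding spike_function_def using inj_spike_point by simp

lemma spike_function_midpoint:
  "spike_function k h ((spike_point (Suc m) + spike_point m) / 2) = 0"
proof -
  have "(spike_point (Suc m) + spike_point m) / 2 \<noteq> spike_point l" for l
    using spike_point_strict_antimono[of m "Suc m"] spike_point_antimono[of l m]
      spike_point_antimono[of "Suc m" l]
    by (cases "l \<le> m") auto
  then show ?thesis unfolding spike_function_def by auto
qed

lemma spike_function_nonneg: "(\<And>i. 0 \<le> h i) \<Longrightarrow> 0 \<le> spike_function k h t"
  unfolding spike_function_def by (auto split: prod.split)

lemma upsilon_p_spike_function_ge:
  assumes p: "p > 0" and h: "0 \<le> h i"
  shows "ereal (real (k i) powr (1 / p) * h i) \<le> upsilon_p p (k i) (spike_function k h)"
proof -
  define m where "m j = prod_encode (i, j - 1)" for j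
  define B where "B j = spike_point (m j)" for j
  define A where "A j = (spike_point (Suc (m j)) + B j) / 2" for j
  have A_B: "spike_point (Suc (m j)) < A j" "A j < B j" for j
    using spike_point_strict_antimono[of "m j" "Suc (m j)"] by (auto simp: A_def B_def)
  have "nonoverlapping (k i) A B"
    unfolding nonoverlapping_def
  proof (intro conjI ballI impI)
    fix j assume "j \<in> {1..k i}"
    show "0 \<le> A j" using A_B(1)[of j] spike_point_pos[of "Suc (m j)"] by linarith
    show "A j \<le> B j" using A_B(2)[of j] by linarith
    show "B j \<le> 1" by (simp add: B_def spike_point_le_one)
  next
    fix j j' assume "j \<in> {1..k i}" "j' \<in> {1..k i}" "j \<noteq> j'"
    then have "m j \<noteq> m j'" by (auto simp: m_def)
    then have "B j' \<le> spike_point (Suc (m j)) \<or> B j \<le> spike_point (Suc (m j'))"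
      unfolding B_def by (metis Suc_leI linorder_neqE_nat spike_point_antimono)
    then show "B j \<le> A j' \<or> B j' \<le> A j" using A_B(1)[of j] A_B(1)[of j'] by linarith
  qed
  then have "ereal ((\<Sum>j=1..k i. \<bar>spike_function k h (B j) - spike_function k h (A j)\<bar> powr p)
      powr (1 / p)) \<le> upsilon_p p (k i) (spike_function k h)"
    by (rule upsilon_p_ge)
  moreover have "(\<Sum>j=1..k i. \<bar>spike_function k h (B j) - spike_function k h (A j)\<bar> powr p)
      = (\<Sum>j=1..k i. h i powr p)"
    using h by (intro sum.cong) (auto simp: A_def B_def m_def spike_function_spike_point
      spike_function_midpoint)
  moreover have "(real (k i) * h i powr p) powr (1 / p) = real (k i) powr (1 / p) * h i"
    using p h by (simp add: powr_mult powr_powr)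
  ultimately show ?thesis by simp
qed

context Phi_seq
begin

lemma sum_phi_abs_diff_le_twice:
  assumes f0: "\<And>t. 0 \<le> f t"
    and T: "\<And>S P. finite S \<Longrightarrow> S \<subseteq> {1..} \<Longrightarrow> inj_on P S \<Longrightarrow> (\<Sum>j\<in>S. phi j (f (P j))) \<le> T"
    and ab: "nonoverlapping n a b"
  shows "(\<Sum>j=1..n. phi j \<bar>f (b j) - f (a j)\<bar>) \<le> 2 * T"
proof -
  txt \<open>Charge a rising interval to its right end and a falling one to its left end;
    distinct nondegenerate intervals have distinct left and distinct right ends.\<close>
  define I where "I = {j\<in>{1..n}. a j < b j}"
  define R where "R = {j\<in>I. f (a j) \<le> f (b j)}"
  have I: "finite I" "I \<subseteq> {1..}" "R \<subseteq> I" by (auto simp: I_def R_def)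
  have "phi j \<bar>f (b j) - f (a j)\<bar> = 0" if "j \<in> {1..n} - I" for j
  proof -
    have "a j \<le> b j" using ab that unfolding nonoverlapping_def by simp
    moreover have "\<not> a j < b j" using that by (simp add: I_def)
    ultimately have "a j = b j" by simp
    then show ?thesis using that phi_zero[of j] by simp
  qed
  then have "(\<Sum>j=1..n. phi j \<bar>f (b j) - f (a j)\<bar>) = (\<Sum>j\<in>I. phi j \<bar>f (b j) - f (a j)\<bar>)"
    by (intro sum.mono_neutral_right) (auto simp: I_def)
  also have "\<dots> = (\<Sum>j\<in>I - R. phi j \<bar>f (b j) - f (a j)\<bar>) + (\<Sum>j\<in>R. phi j \<bar>f (b j) - f (a j)\<bar>)"
    using I by (intro sum.subset_diff)
  also have "\<dots> \<le> (\<Sum>j\<in>I - R. phi j (f (a j))) + (\<Sum>j\<in>R. phi j (f (b j)))"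
  proof (intro add_mono sum_mono)
    fix j
    show "phi j \<bar>f (b j) - f (a j)\<bar> \<le> phi j (f (a j))" if "j \<in> I - R"
      using that I f0[of "b j"] by (intro phi_mono) (auto simp: R_def)
    show "phi j \<bar>f (b j) - f (a j)\<bar> \<le> phi j (f (b j))" if "j \<in> R"
      using that I f0[of "a j"] by (intro phi_mono) (auto simp: R_def)
  qed
  also have "\<dots> \<le> T + T"
  proof (intro add_mono T)
    show "inj_on a (I - R)" "inj_on b R"
      using nonoverlapping_inj_on[OF ab] I by (auto simp: I_def intro: inj_on_subset)
  qed (use I finite_subset in auto)
  finally show ?thesis by simp
qed

lemma sum_phi_blocks_le_suminf:
  assumes S: "finite S" "S \<subseteq> {1..}" and blocks: "\<And>i. card {j\<in>S. blk j = i} \<le> k i"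
    and h: "\<And>i. 0 \<le> h i" and summable: "summable (\<lambda>i. Phi_n phi (k i) (h i))"
  shows "(\<Sum>j\<in>S. phi j (h (blk j))) \<le> (\<Sum>i. Phi_n phi (k i) (h i))"
proof -
  have "(\<Sum>j\<in>S. phi j (h (blk j))) = (\<Sum>i\<in>blk ` S. \<Sum>j\<in>{j\<in>S. blk j = i}. phi j (h i))"
    using S(1) by (subst sum.group[symmetric, where g = blk]) (auto intro!: sum.cong)
  also have "\<dots> \<le> (\<Sum>i\<in>blk ` S. Phi_n phi (k i) (h i))"
  proof (rule sum_mono)
    fix i
    have "(\<Sum>j\<in>{j\<in>S. blk j = i}. phi j (h i)) \<le> Phi_n phi (card {j\<in>S. blk j = i}) (h i)"
      using S h by (intro sum_phi_le_Phi_n_card) auto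
    also have "\<dots> \<le> Phi_n phi (k i) (h i)" using blocks h by (rule Phi_n_mono_index)
    finally show "(\<Sum>j\<in>{j\<in>S. blk j = i}. phi j (h i)) \<le> Phi_n phi (k i) (h i)" .
  qed
  also have "\<dots> \<le> (\<Sum>i. Phi_n phi (k i) (h i))"
    using summable S(1) h by (intro sum_le_suminf) (auto intro: Phi_n_nonneg)
  finally show ?thesis .
qed

lemma sum_phi_spike_function_le:
  assumes h: "\<And>i. 0 \<le> h i" and summable: "summable (\<lambda>i. Phi_n phi (k i) (h i))"
    and S: "finite S" "S \<subseteq> {1..}" and P: "inj_on P S"
  shows "(\<Sum>j\<in>S. phi j (spike_function k h (P j))) \<le> (\<Sum>i. Phi_n phi (k i) (h i))"
proof -
  define \<mu> where "\<mu> j = prod_decode (inv spike_point (P j))" for j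
  define S' where "S' = {j\<in>S. P j \<in> range spike_point \<and> snd (\<mu> j) < k (fst (\<mu> j))}"
  have S': "finite S'" "S' \<subseteq> {1..}" using S by (auto simp: S'_def)
  have "(\<Sum>j\<in>S. phi j (spike_function k h (P j))) = (\<Sum>j\<in>S'. phi j (h (fst (\<mu> j))))"
    using S by (intro sum.mono_neutral_cong_right)
      (auto simp: S'_def \<mu>_def spike_function_def phi_zero split: prod.split)
  also have "\<dots> \<le> (\<Sum>i. Phi_n phi (k i) (h i))"
  proof (rule sum_phi_blocks_le_suminf[OF S' _ h summable])
    fix i
    have "inj_on \<mu> S'"
    proof (rule inj_onI)
      fix x y assume "x \<in> S'" "y \<in> S'" "\<mu> x = \<mu> y"
      then have "spike_point (inv spike_point (P x)) = spike_point (inv spike_point (P y))"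
        "P x \<in> range spike_point" "P y \<in> range spike_point"
        using inj_prod_decode by (auto simp: \<mu>_def S'_def dest: injD)
      then have "P x = P y" by (simp add: f_inv_into_f)
      then show "x = y" using P \<open>x \<in> S'\<close> \<open>y \<in> S'\<close> by (auto simp: S'_def dest: inj_onD)
    qed
    then have "inj_on (\<lambda>j. snd (\<mu> j)) {j\<in>S'. fst (\<mu> j) = i}"
      by (auto simp: inj_on_def prod_eq_iff)
    moreover have "(\<lambda>j. snd (\<mu> j)) ` {j\<in>S'. fst (\<mu> j) = i} \<subseteq> {..<k i}"
      by (auto simp: S'_def)
    ultimately show "card {j\<in>S'. fst (\<mu> j) = i} \<le> k i"
      using card_inj_on_le[of _ _ "{..<k i}"] by fastforce
  qed
  finally show ?thesis .
qed

lemma spike_function_in_PhiBV: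
  assumes h: "\<And>i. 0 \<le> h i" and summable: "summable (\<lambda>i. Phi_n phi (k i) (h i))"
  shows "spike_function k h \<in> PhiBV phi"
  unfolding PhiBV_iff
proof (intro exI conjI allI impI)
  have nonneg: "0 \<le> spike_function k h t" for t using h by (rule spike_function_nonneg)
  have spikes: "(\<Sum>j\<in>S. phi j (spike_function k h (P j))) \<le> (\<Sum>i. Phi_n phi (k i) (h i))"
    if "finite S" "S \<subseteq> {1..}" "inj_on P S" for S P
    using sum_phi_spike_function_le[OF h summable that] .
  fix n a b assume "nonoverlapping n a b"
  then show "(\<Sum>j=1..n. phi j \<bar>1 * spike_function k h (b j) - 1 * spike_function k h (a j)\<bar>)
      \<le> 2 * (\<Sum>i. Phi_n phi (k i) (h i))"
    using sum_phi_abs_diff_le_twice[OF nonneg spikes] by simp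
qed simp

lemma PhiBV_not_subset_V_p:
  assumes p: "1 \<le> p" and nu_pos: "\<And>n. n \<ge> 1 \<Longrightarrow> 0 < nu n"
    and unbounded: "\<And>C. \<exists>k\<ge>1. C * nu k < real k powr (1 / p) * Phi_n_inv phi k 1"
  shows "\<not> PhiBV phi \<subseteq> V_p p nu"
proof
  assume subset: "PhiBV phi \<subseteq> V_p p nu"
  have "\<exists>k. \<forall>i. k i \<ge> 1 \<and> 4 ^ i * nu (k i) < real (k i) powr (1 / p) * Phi_n_inv phi (k i) 1"
    using unbounded by (intro choice allI) blast
  then obtain k where k: "\<And>i. k i \<ge> 1"
    "\<And>i. 4 ^ i * nu (k i) < real (k i) powr (1 / p) * Phi_n_inv phi (k i) 1"
    by blast
  define h where "h i = (1 / 2) ^ i * Phi_n_inv phi (k i) 1" for i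
  have h0: "0 \<le> h i" for i using Phi_n_inv(1)[OF k(1)[of i], of 1] by (simp add: h_def)
  have Phi_h: "Phi_n phi (k i) (h i) \<le> (1 / 2) ^ i" for i
  proof -
    have "Phi_n phi (k i) (h i) \<le> (1 / 2) ^ i * Phi_n phi (k i) (Phi_n_inv phi (k i) 1)"
      unfolding h_def using Phi_n_inv(1)[OF k(1)[of i], of 1]
      by (intro Phi_n_scale_le) (auto simp: power_le_one)
    then show ?thesis using Phi_n_inv(2)[OF k(1)[of i], of 1] by simp
  qed
  have summable: "summable (\<lambda>i. Phi_n phi (k i) (h i))"
    by (rule summable_comparison_test'[OF summable_geometric[of "1 / 2"]])
      (use Phi_h Phi_n_nonneg[OF h0] in auto)
  define f where "f = spike_function k h"
  have "f \<in> PhiBV phi" unfolding f_def using h0 summable by (rule spike_function_in_PhiBV)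
  then have "f \<in> V_p p nu" using subset by blast
  then obtain K where K: "\<And>n. n \<ge> 1 \<Longrightarrow> upsilon_p p n f \<le> ereal (K * nu n)"
    using V_pD[of f p nu] nu_pos by blast
  obtain i :: nat where i: "K < 2 ^ i" using real_arch_pow[of 2 K] by auto
  have "2 ^ i * nu (k i) = (1 / 2) ^ i * (4 ^ i * nu (k i))"
    by (simp add: power_divide field_simps flip: power_mult_distrib)
  also have "\<dots> \<le> real (k i) powr (1 / p) * h i"
    using k(2)[of i] by (simp add: h_def)
  finally have "ereal (2 ^ i * nu (k i)) \<le> ereal (real (k i) powr (1 / p) * h i)" by simp
  also have "\<dots> \<le> upsilon_p p (k i) f"
    unfolding f_def using p h0 by (intro upsilon_p_spike_function_ge) auto
  also have "\<dots> \<le> ereal (K * nu (k i))" using K k(1) by blast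
  finally have "2 ^ i * nu (k i) \<le> K * nu (k i)" by simp
  then show False using i nu_pos[OF k(1)[of i]] by simp
qed

end

theorem theorem6p2:
  fixes phi :: "nat \<Rightarrow> real \<Rightarrow> real" and nu :: "nat \<Rightarrow> real" and p :: real
  assumes "Phi_sequence phi" and "modulus_of_variation nu" and "1 \<le> p"
  shows "PhiBV phi \<subseteq> V_p p nu \<longleftrightarrow>
    limsup (\<lambda>n. ereal ((1 / nu n) *
      Max ((\<lambda>k. real k powr (1 / p) * Phi_n_inv phi k 1) ` {1..n}))) < \<infinity>"
proof -
  interpret Phi_seq phi by (rule Phi_seq.intro) (rule assms(1))
  note nu_pos = modulus_of_variation_pos[OF assms(2)]
  note nu_mono = modulus_of_variation_mono[OF assms(2)]
  have "limsup (\<lambda>n. ereal ((1 / nu n) *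
      Max ((\<lambda>k. real k powr (1 / p) * Phi_n_inv phi k 1) ` {1..n}))) < \<infinity> \<longleftrightarrow>
    (\<exists>C. \<forall>k\<ge>1. real k powr (1 / p) * Phi_n_inv phi k 1 \<le> C * nu k)"
    by (rule limsup_Max_div_less_PInf_iff[OF nu_pos nu_mono])
  moreover have "PhiBV phi \<subseteq> V_p p nu \<longleftrightarrow>
    (\<exists>C. \<forall>k\<ge>1. real k powr (1 / p) * Phi_n_inv phi k 1 \<le> C * nu k)"
    using PhiBV_subset_V_p[OF assms(3) nu_pos nu_mono] PhiBV_not_subset_V_p[OF assms(3) nu_pos]
    by (meson not_le)
  ultimately show ?thesis by simp
qed

end
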